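(* Let Assumption (A) be satisfied. Then the Pareto frontier of the multi-criteria minimization problem with objectives $f\mapsto\mathcal R(f)$ and $f\mapsto\mathcal U(f)$ is $\{f^*_\alpha\}_{\alpha\in[0,1]}$, where predictions with identical values of $(\mathcal R,\mathcal U)$ are identified.
   Context: Setting: $(\boldsymbol X,S)$ random in $\mathbb R^p\times[K]$ with $\mathbb P(S=s)>0$; $f^*:\mathbb R^p\times[K]\to\mathbb R$ measurable; $\boldsymbol w\in\Delta^{K-1}$. For measurable $f$: $\mathcal R(f)=\sum_sw_s\mathbb E[(f(\boldsymbol X,S)-f^*(\boldsymbol X,S))^2\mid S=s]$, $\mathcal U(f)=\min_{\nu\in\mathcal P_2(\mathbb R)}\sum_sw_s\mathsf W_2^2(\mathrm{Law}(f(\boldsymbol X,S)\mid S=s),\nu)$ ($\mathsf W_2$ Wasserstein-2). $\nu^*_s=\mathrm{Law}(f^*(\boldsymbol X,S)\mid S=s)$. (A): each $\nu^*_s$ is non-atomic with finite second moment. $f^*_\alpha$ is a minimizer of $\mathcal R(f)$ subject to $\mathcal U(f)\le\alpha\,\mathcal U(f^* )$; explicitly $f^*_\alpha(\boldsymbol x,s)=\sqrt\alpha f^*(\boldsymbol x,s)+(1-\sqrt\alpha)\sum_{s'}w_{s'}F^{-1}_{\nu^*_{s'}}\circ F_{\nu^*_s}\circ f^*(\boldsymbol x,s)$ with $F_\mu$ the CDF and $F^{-1}_\mu$ the generalized inverse. $f$ Pareto dominates $f'$ if either ($\mathcal R(f)\le\mathcal R(f')$ and $\mathcal U(f)<\mathcal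 U(f')$) or ($\mathcal R(f)<\mathcal R(f')$ and $\mathcal U(f)\le\mathcal U(f')$). $f$ is Pareto efficient if no prediction Pareto dominates it; the Pareto frontier is the set of Pareto efficient predictions. *)

theory Defs
  imports "HOL-Probability.Probability"
begin

definition cond_meas :: "'a measure \<Rightarrow> ('a \<Rightarrow> 'k) \<Rightarrow> 'k \<Rightarrow> 'a measure" where
  "cond_meas M S s = uniform_measure M {\<omega> \<in> space M. S \<omega> = s}"

definition cond_law ::
  "'a measure \<Rightarrow> ('a \<Rightarrow> 'x) \<Rightarrow> ('a \<Rightarrow> 'k) \<Rightarrow> ('x \<Rightarrow> 'k \<Rightarrow> real) \<Rightarrow> 'k \<Rightarrow> real measure" where
  "cond_law M X S f s = distr (cond_meas M S s) borel (\<lambda>\<omega>. f (X \<omega>) (S \<omega>))"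

text \<open>Measurable predictions R^p x [K] -> R (the index set is discrete).\<close>
definition pred_measurable :: "(('p::euclidean_space) \<Rightarrow> 'k \<Rightarrow> real) \<Rightarrow> bool" where
  "pred_measurable f \<longleftrightarrow> (\<forall>s. (\<lambda>x. f x s) \<in> borel_measurable borel)"

definition risk ::
  "'a measure \<Rightarrow> ('a \<Rightarrow> 'x) \<Rightarrow> ('a \<Rightarrow> 'k::finite) \<Rightarrow> ('k \<Rightarrow> real) \<Rightarrow> ('x \<Rightarrow> 'k \<Rightarrow> real)
    \<Rightarrow> ('x \<Rightarrow> 'k \<Rightarrow> real) \<Rightarrow> ennreal" where
  "risk M X S w fstar f =
     (\<Sum>s\<in>UNIV. ennreal (w s) *
        (\<integral>\<^sup>+\<omega>. ennreal ((f (X \<omega>) (S \<omega>) - fstar (X \<omega>) (S \<omega>))\<^sup>2) \<partial>cond_meas M S s))"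

definition P2 :: "real measure set" where
  "P2 = {\<nu>. prob_space \<nu> \<and> sets \<nu> = sets borel \<and> (\<integral>\<^sup>+x. ennreal (x\<^sup>2) \<partial>\<nu>) < \<top>}"

definition couplings :: "real measure \<Rightarrow> real measure \<Rightarrow> (real \<times> real) measure set" where
  "couplings \<mu> \<nu> = {\<gamma>. prob_space \<gamma> \<and> sets \<gamma> = sets (borel :: (real \<times> real) measure) \<and>
                        distr \<gamma> borel fst = \<mu> \<and> distr \<gamma> borel snd = \<nu>}"

definition W2sq :: "real measure \<Rightarrow> real measure \<Rightarrow> ennreal" where
  "W2sq \<mu> \<nu> = (INF \<gamma>\<in>couplings \<mu> \<nu>. \<integral>\<^sup>+p. ennreal ((fst p - snd p)\<^sup>2) \<partial>\<gamma>)"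

definition unfairness ::
  "'a measure \<Rightarrow> ('a \<Rightarrow> 'x) \<Rightarrow> ('a \<Rightarrow> 'k::finite) \<Rightarrow> ('k \<Rightarrow> real) \<Rightarrow> ('x \<Rightarrow> 'k \<Rightarrow> real) \<Rightarrow> ennreal" where
  "unfairness M X S w f =
     (INF \<nu>\<in>P2. \<Sum>s\<in>UNIV. ennreal (w s) * W2sq (cond_law M X S f s) \<nu>)"

definition pareto_dominates ::
  "'a measure \<Rightarrow> ('a \<Rightarrow> 'x) \<Rightarrow> ('a \<Rightarrow> 'k::finite) \<Rightarrow> ('k \<Rightarrow> real) \<Rightarrow> ('x \<Rightarrow> 'k \<Rightarrow> real)
    \<Rightarrow> ('x \<Rightarrow> 'k \<Rightarrow> real) \<Rightarrow> ('x \<Rightarrow> 'k \<Rightarrow> real) \<Rightarrow> bool" where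
  "pareto_dominates M X S w fstar f f' \<longleftrightarrow>
     (risk M X S w fstar f \<le> risk M X S w fstar f' \<and> unfairness M X S w f < unfairness M X S w f') \<or>
     (risk M X S w fstar f < risk M X S w fstar f' \<and> unfairness M X S w f \<le> unfairness M X S w f')"

definition pareto_efficient ::
  "'a measure \<Rightarrow> ('a \<Rightarrow> 'p::euclidean_space) \<Rightarrow> ('a \<Rightarrow> 'k::finite) \<Rightarrow> ('k \<Rightarrow> real)
    \<Rightarrow> ('p \<Rightarrow> 'k \<Rightarrow> real) \<Rightarrow> ('p \<Rightarrow> 'k \<Rightarrow> real) \<Rightarrow> bool" where
  "pareto_efficient M X S w fstar f \<longleftrightarrow>
     pred_measurable f \<and> \<not> (\<exists>g. pred_measurable g \<and> pareto_dominates M X S w fstar g f)"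

definition nonatomic :: "'b measure \<Rightarrow> bool" where
  "nonatomic \<mu> \<longleftrightarrow>
     \<not> (\<exists>A\<in>sets \<mu>. emeasure \<mu> A > 0 \<and>
          (\<forall>B\<in>sets \<mu>. B \<subseteq> A \<longrightarrow> emeasure \<mu> B = 0 \<or> emeasure \<mu> B = emeasure \<mu> A))"

definition gen_inv :: "real measure \<Rightarrow> real \<Rightarrow> real" where
  "gen_inv \<mu> t = Inf {x. t \<le> cdf \<mu> x}"

definition assumption_A ::
  "'a measure \<Rightarrow> ('a \<Rightarrow> 'x) \<Rightarrow> ('a \<Rightarrow> 'k) \<Rightarrow> ('x \<Rightarrow> 'k \<Rightarrow> real) \<Rightarrow> bool" where
  "assumption_A M X S fstar \<longleftrightarrow>
     (\<forall>s. nonatomic (cond_law M X S fstar s) \<and>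
          (\<integral>\<^sup>+y. ennreal (y\<^sup>2) \<partial>cond_law M X S fstar s) < \<top>)"

definition f_alpha ::
  "'a measure \<Rightarrow> ('a \<Rightarrow> 'x) \<Rightarrow> ('a \<Rightarrow> 'k::finite) \<Rightarrow> ('k \<Rightarrow> real) \<Rightarrow> ('x \<Rightarrow> 'k \<Rightarrow> real)
    \<Rightarrow> real \<Rightarrow> 'x \<Rightarrow> 'k \<Rightarrow> real" where
  "f_alpha M X S w fstar \<alpha> x s =
     sqrt \<alpha> * fstar x s +
     (1 - sqrt \<alpha>) * (\<Sum>s'\<in>UNIV. w s' *
        gen_inv (cond_law M X S fstar s') (cdf (cond_law M X S fstar s) (fstar x s)))"

end

theory Submission
  imports Defs
begin

text \<open>On the real line the squared Wasserstein distance is the \<open>L\<^sup>2\<close> distance of the quantile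
  functions on \<open>(0, 1)\<close>. Let \<open>q\<^sub>s\<close> be the quantile function of \<open>\<nu>\<^sup>*\<^sub>s\<close>, \<open>B = \<Sum>\<^sub>s w\<^sub>s q\<^sub>s\<close> their
  barycentre and \<open>V = \<Sum>\<^sub>s w\<^sub>s \<parallel>q\<^sub>s - B\<parallel>\<^sup>2\<close>. Then \<open>V \<le> \<Sum>\<^sub>s w\<^sub>s W\<^sub>2\<^sup>2(\<nu>\<^sup>*\<^sub>s, \<nu>)\<close> for every \<open>\<nu>\<close>, and the
  triangle inequality for \<open>W\<^sub>2\<close> through the group laws of any prediction \<open>f\<close> gives
  \<open>\<surd>V \<le> \<surd>R(f) + \<surd>U(f)\<close>. The prediction \<open>f\<^sup>*\<^sub>\<alpha>\<close> moves \<open>f\<^sup>*\<close> linearly towards the monotone map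
  \<open>y \<mapsto> B(F\<^sub>s(y))\<close>, which under (A) transports \<open>\<nu>\<^sup>*\<^sub>s\<close> onto the law of \<open>B\<close>; hence
  \<open>R(f\<^sup>*\<^sub>\<alpha>) = (1 - \<surd>\<alpha>)\<^sup>2 V\<close> and \<open>U(f\<^sup>*\<^sub>\<alpha>) \<le> \<alpha> V\<close>, and the triangle inequality forces equality.
  Finally, a pair \<open>(r, u)\<close> subject to \<open>\<surd>V \<le> \<surd>r + \<surd>u\<close> is Pareto minimal exactly when it lies
  on the curve \<open>((1 - \<surd>\<alpha>)\<^sup>2 V, \<alpha> V)\<close>, \<open>\<alpha> \<in> [0, 1]\<close>.\<close>

section \<open>Quantile functions\<close>

abbreviation uniform_01 :: "real measure" where
  "uniform_01 \<equiv> restrict_space lborel {0<..<1}"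

lemma prob_space_uniform_01: "prob_space uniform_01"
  by (auto simp: emeasure_restrict_space space_restrict_space intro!: prob_spaceI)

lemma right_continuous_mono_cdf:
  assumes "real_distribution \<mu>"
  shows "right_continuous_mono (cdf \<mu>) 0 1"
proof -
  interpret real_distribution \<mu> by (rule assms)
  show ?thesis
  proof
    show "continuous (at_right x) (cdf \<mu>)" for x
      by (rule cdf_is_right_cont)
    show "mono (cdf \<mu>)"
      by (rule monoI, rule cdf_nondecreasing)
    show "(cdf \<mu> \<longlongrightarrow> 0) at_bot"
      by (rule cdf_lim_at_bot)
    show "(cdf \<mu> \<longlongrightarrow> 1) at_top"
      by (rule cdf_lim_at_top_prob)
  qed
qed

lemma gen_inv_le_iff:
  assumes "real_distribution \<mu>" "0 < t" "t < 1"
  shows "gen_inv \<mu> t \<le> x \<longleftrightarrow> t \<le> cdf \<mu> x"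
  unfolding gen_inv_def
  by (rule right_continuous_mono.pseudoinverse[OF right_continuous_mono_cdf[OF assms(1)] assms(2,3),
        symmetric])

lemma distr_uniform_01_gen_inv:
  assumes "real_distribution \<mu>"
  shows "distr uniform_01 borel (gen_inv \<mu>) = \<mu>"
  using cdf_distribution.distr_I_eq_M[of \<mu>] assms
  unfolding cdf_distribution_def gen_inv_def[abs_def] by simp

lemma borel_measurable_gen_inv:
  assumes "real_distribution \<mu>"
  shows "gen_inv \<mu> \<in> borel_measurable borel"
proof -
  interpret real_distribution \<mu> by (rule assms)
  have "{x. t \<le> cdf \<mu> x} = UNIV" if "t \<le> 0" for t
    using cdf_nonneg that order_trans by blast
  moreover have "{x. t \<le> cdf \<mu> x} = {}" if "1 < t" for t
    using cdf_bounded_prob that by (auto simp: not_le intro: le_less_trans)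
  \<comment> \<open>outside \<open>(0, 1)\<close> the infimum is taken over \<open>UNIV\<close> or \<open>{}\<close>, i.e. a junk constant\<close>
  ultimately have piecewise: "gen_inv \<mu> = (\<lambda>t. if 0 < t \<and> t < 1 then gen_inv \<mu> t
      else if t \<le> 0 then Inf UNIV else if t = 1 then gen_inv \<mu> 1 else Inf {})"
    by (auto simp: gen_inv_def fun_eq_iff)
  have inner: "gen_inv \<mu> \<in> borel_measurable (restrict_space borel {t. 0 < t \<and> t < 1})"
    using cdf_distribution.measurable_CI[of \<mu>] assms
    by (simp add: cdf_distribution_def gen_inv_def[abs_def] greaterThanLessThan_def
        greaterThan_def lessThan_def Collect_conj_eq[symmetric])
  have outer: "(\<lambda>t::real. if t \<le> 0 then Inf UNIV else if t = 1 then gen_inv \<mu> 1 else Inf {})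
      \<in> borel_measurable borel"
    by measurable
  have dom: "{t \<in> space borel. 0 < t \<and> t < (1::real)} \<in> sets borel"
    by measurable
  have "(\<lambda>t. if 0 < t \<and> t < 1 then gen_inv \<mu> t
      else if t \<le> 0 then Inf UNIV else if t = 1 then gen_inv \<mu> 1 else Inf {}) \<in> borel_measurable borel"
    by (rule measurable_If_restrict_space_iff[OF dom, THEN iffD2])
       (blast intro: inner measurable_restrict_space1[OF outer])
  then show ?thesis
    by (simp only: piecewise[symmetric])
qed

lemma gen_inv_measurable_uniform_01:
  "real_distribution \<mu> \<Longrightarrow> gen_inv \<mu> \<in> borel_measurable uniform_01"
  by (rule measurable_restrict_space1)
     (simp add: measurable_cong_sets[OF sets_lborel refl] borel_measurable_gen_inv)

lemma emeasure_singleton_nonatomic: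
  assumes "nonatomic \<mu>" "{x} \<in> sets \<mu>"
  shows "emeasure \<mu> {x} = 0"
  using assms unfolding nonatomic_def by (fastforce dest: subset_singletonD)

lemma cdf_gen_inv:
  assumes "real_distribution \<mu>" "nonatomic \<mu>" "0 < t" "t < 1"
  shows "cdf \<mu> (gen_inv \<mu> t) = t"
proof -
  interpret real_distribution \<mu> by (rule assms)
  let ?x = "gen_inv \<mu> t"
  have "measure \<mu> {?x} = 0"
    using emeasure_singleton_nonatomic[OF assms(2)] by (simp add: measure_def)
  then have "isCont (cdf \<mu>) ?x"
    by (simp add: isCont_cdf)
  then have "(cdf \<mu> \<longlongrightarrow> cdf \<mu> ?x) (at_left ?x)"
    by (simp add: isCont_def filterlim_at_split)
  moreover have "eventually (\<lambda>y. cdf \<mu> y \<le> t) (at_left ?x)"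
  proof -
    have "cdf \<mu> y \<le> t" if "y < ?x" for y
      using gen_inv_le_iff[OF assms(1,3,4), of y] that by linarith
    then show ?thesis
      by (auto simp: eventually_at_left_field intro!: exI[of _ "?x - 1"])
  qed
  ultimately have "cdf \<mu> ?x \<le> t"
    by (rule tendsto_upperbound) simp
  moreover have "t \<le> cdf \<mu> ?x"
    using gen_inv_le_iff[OF assms(1,3,4), of ?x] by simp
  ultimately show ?thesis
    by simp
qed

lemma weighted_sum_square_diff_decomp:
  fixes w x :: "'k \<Rightarrow> real"
  assumes "finite I" "(\<Sum>s\<in>I. w s) = 1"
  defines "b \<equiv> \<Sum>s\<in>I. w s * x s"
  shows "(\<Sum>s\<in>I. w s * (x s - y)\<^sup>2) = (\<Sum>s\<in>I. w s * (x s - b)\<^sup>2) + (b - y)\<^sup>2"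
proof -
  have "(\<Sum>s\<in>I. w s * (x s - y)\<^sup>2) =
        (\<Sum>s\<in>I. w s * (x s - b)\<^sup>2 + 2 * (b - y) * (w s * x s) - 2 * (b - y) * b * w s + (b - y)\<^sup>2 * w s)"
    by (rule sum.cong) (auto simp: power2_eq_square algebra_simps)
  also have "\<dots> = (\<Sum>s\<in>I. w s * (x s - b)\<^sup>2) + (b - y)\<^sup>2"
    by (simp add: sum.distrib sum_subtractf sum_distrib_left[symmetric] assms(2) b_def)
  finally show ?thesis .
qed

lemma power2_diff_le_eps:
  fixes a b c e :: real
  assumes "0 < e"
  shows "(a - c)\<^sup>2 \<le> (1 + e) * (a - b)\<^sup>2 + (1 + 1 / e) * (b - c)\<^sup>2"
proof -
  have "0 \<le> (e * (a - b) - (b - c))\<^sup>2 / e"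
    using assms by simp
  also have "\<dots> = e * (a - b)\<^sup>2 - 2 * (a - b) * (b - c) + (b - c)\<^sup>2 / e"
    using assms by (simp add: power2_eq_square field_simps)
  finally have "2 * (a - b) * (b - c) \<le> e * (a - b)\<^sup>2 + (b - c)\<^sup>2 / e"
    by simp
  moreover have "(a - c)\<^sup>2 = (a - b)\<^sup>2 + 2 * (a - b) * (b - c) + (b - c)\<^sup>2"
    by (simp add: power2_eq_square algebra_simps)
  ultimately show ?thesis
    by (simp add: algebra_simps)
qed

lemma sqrt_le_add_sqrt_of_eps:
  fixes r u v :: real
  assumes "0 \<le> r" "0 \<le> u" and bound: "\<And>e. 0 < e \<Longrightarrow> v \<le> (1 + e) * r + (1 + 1 / e) * u"
  shows "sqrt v \<le> sqrt r + sqrt u"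
proof (rule field_le_epsilon)
  fix d :: real
  assume "0 < d"
  define \<delta> where "\<delta> = (d / 2)\<^sup>2"
  have \<delta>: "0 < \<delta>" "sqrt \<delta> = d / 2"
    using \<open>0 < d\<close> by (simp_all add: \<delta>_def)
  define a b where "a = sqrt (r + \<delta>)" and "b = sqrt (u + \<delta>)"
  have ab: "0 < a" "0 < b" "a\<^sup>2 = r + \<delta>" "b\<^sup>2 = u + \<delta>"
    using assms(1,2) \<delta> by (simp_all add: a_def b_def)
  \<comment> \<open>\<open>e = b / a\<close> balances the two terms; the shift by \<open>\<delta>\<close> keeps \<open>a\<close> and \<open>b\<close> positive\<close>
  have "v \<le> (1 + b / a) * r + (1 + a / b) * u"
    using bound[of "b / a"] ab by simp
  also have "\<dots> \<le> (1 + b / a) * a\<^sup>2 + (1 + a / b) * b\<^sup>2"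
    using ab \<delta> by (intro add_mono mult_left_mono) auto
  also have "\<dots> = (a + b)\<^sup>2"
    using ab(1,2) by (simp add: field_simps power2_eq_square)
  finally have "sqrt v \<le> a + b"
    using ab real_sqrt_le_mono by fastforce
  also have "\<dots> \<le> sqrt r + sqrt u + d"
    using sqrt_add_le_add_sqrt[of r \<delta>] sqrt_add_le_add_sqrt[of u \<delta>] assms(1,2) \<delta>
    by (simp add: a_def b_def)
  finally show "sqrt v \<le> sqrt r + sqrt u + d" .
qed

lemma tradeoff_curve_tight:
  fixes \<alpha> v r u :: real
  assumes "0 \<le> \<alpha>" "\<alpha> \<le> 1" "0 \<le> v" "0 \<le> r" "0 \<le> u"
    and tradeoff: "sqrt v \<le> sqrt r + sqrt u"
    and r_le: "r \<le> (1 - sqrt \<alpha>)\<^sup>2 * v" and u_le: "u \<le> \<alpha> * v"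
  shows "r = (1 - sqrt \<alpha>)\<^sup>2 * v \<and> u = \<alpha> * v"
proof -
  have "sqrt r \<le> (1 - sqrt \<alpha>) * sqrt v"
    using real_sqrt_le_mono[OF r_le] assms(2) by (simp add: real_sqrt_mult)
  moreover have "sqrt u \<le> sqrt \<alpha> * sqrt v"
    using real_sqrt_le_mono[OF u_le] by (simp add: real_sqrt_mult)
  ultimately have "sqrt r = (1 - sqrt \<alpha>) * sqrt v" "sqrt u = sqrt \<alpha> * sqrt v"
    using tradeoff by (simp_all add: algebra_simps)
  then have "(sqrt r)\<^sup>2 = (1 - sqrt \<alpha>)\<^sup>2 * v" "(sqrt u)\<^sup>2 = \<alpha> * v"
    using assms(1,3) by (simp_all add: power_mult_distrib)
  then show ?thesis
    using assms(4,5) by simp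
qed

lemma ennreal_tradeoff_curve_tight:
  fixes \<alpha> v :: real and x y :: ennreal
  assumes "\<alpha> \<in> {0..1}" "0 \<le> v"
    and tradeoff: "\<And>r u. x = ennreal r \<Longrightarrow> y = ennreal u \<Longrightarrow> 0 \<le> r \<Longrightarrow> 0 \<le> u \<Longrightarrow>
                     sqrt v \<le> sqrt r + sqrt u"
    and x_le: "x \<le> ennreal ((1 - sqrt \<alpha>)\<^sup>2 * v)" and y_le: "y \<le> ennreal (\<alpha> * v)"
  shows "x = ennreal ((1 - sqrt \<alpha>)\<^sup>2 * v) \<and> y = ennreal (\<alpha> * v)"
proof -
  obtain r u where r: "x = ennreal r" "0 \<le> r" and u: "y = ennreal u" "0 \<le> u"
    using x_le y_le by (cases x; cases y) (auto simp: top_unique)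
  have "r \<le> (1 - sqrt \<alpha>)\<^sup>2 * v" "u \<le> \<alpha> * v"
    using x_le y_le r u assms(1,2) by (simp_all add: ennreal_le_iff)
  then show ?thesis
    using tradeoff_curve_tight[of \<alpha> v r u] tradeoff[OF r(1) u(1) r(2) u(2)] assms(1,2) r u by auto
qed

lemma nn_integral_weighted_sum:
  fixes w :: "'k \<Rightarrow> real" and h :: "'k \<Rightarrow> 't \<Rightarrow> real"
  assumes "finite I" "\<And>s. s \<in> I \<Longrightarrow> 0 \<le> w s" "\<And>s t. 0 \<le> h s t"
    and "\<And>s. s \<in> I \<Longrightarrow> h s \<in> borel_measurable N"
  shows "(\<Sum>s\<in>I. ennreal (w s) * (\<integral>\<^sup>+t. ennreal (h s t) \<partial>N)) =
         (\<integral>\<^sup>+t. ennreal (\<Sum>s\<in>I. w s * h s t) \<partial>N)"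
proof -
  have "(\<Sum>s\<in>I. ennreal (w s) * (\<integral>\<^sup>+t. ennreal (h s t) \<partial>N)) =
        (\<integral>\<^sup>+t. (\<Sum>s\<in>I. ennreal (w s) * ennreal (h s t)) \<partial>N)"
    using assms by (simp add: nn_integral_sum nn_integral_cmult)
  also have "\<dots> = (\<integral>\<^sup>+t. ennreal (\<Sum>s\<in>I. w s * h s t) \<partial>N)"
    using assms by (intro nn_integral_cong) (simp add: sum_ennreal[symmetric] ennreal_mult)
  finally show ?thesis .
qed

lemma nn_integral_power2_diff_le_eps:
  fixes a b c :: "'t \<Rightarrow> real"
  assumes [measurable]: "a \<in> borel_measurable N" "b \<in> borel_measurable N" "c \<in> borel_measurable N"
    and e: "0 < e"
  shows "(\<integral>\<^sup>+t. ennreal ((a t - c t)\<^sup>2) \<partial>N) \<le>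
         ennreal (1 + e) * (\<integral>\<^sup>+t. ennreal ((a t - b t)\<^sup>2) \<partial>N) +
         ennreal (1 + 1 / e) * (\<integral>\<^sup>+t. ennreal ((b t - c t)\<^sup>2) \<partial>N)"
proof -
  have "ennreal ((a t - c t)\<^sup>2) \<le>
        ennreal (1 + e) * ennreal ((a t - b t)\<^sup>2) + ennreal (1 + 1 / e) * ennreal ((b t - c t)\<^sup>2)" for t
  proof -
    have "ennreal ((a t - c t)\<^sup>2) \<le> ennreal ((1 + e) * (a t - b t)\<^sup>2 + (1 + 1 / e) * (b t - c t)\<^sup>2)"
      by (rule ennreal_leI, rule power2_diff_le_eps[OF e])
    also have "\<dots> = ennreal (1 + e) * ennreal ((a t - b t)\<^sup>2) + ennreal (1 + 1 / e) * ennreal ((b t - c t)\<^sup>2)"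
      using e by (simp add: ennreal_plus ennreal_mult)
    finally show ?thesis .
  qed
  then have "(\<integral>\<^sup>+t. ennreal ((a t - c t)\<^sup>2) \<partial>N) \<le>
        (\<integral>\<^sup>+t. ennreal (1 + e) * ennreal ((a t - b t)\<^sup>2) +
               ennreal (1 + 1 / e) * ennreal ((b t - c t)\<^sup>2) \<partial>N)"
    by (rule nn_integral_mono)
  also have "\<dots> = ennreal (1 + e) * (\<integral>\<^sup>+t. ennreal ((a t - b t)\<^sup>2) \<partial>N) +
                   ennreal (1 + 1 / e) * (\<integral>\<^sup>+t. ennreal ((b t - c t)\<^sup>2) \<partial>N)"
    by (simp add: nn_integral_add nn_integral_cmult)
  finally show ?thesis .
qed

section \<open>The Wasserstein distance on the real line\<close>

lemma sets_borel_pairI: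
  "{p \<in> space (borel \<Otimes>\<^sub>M borel). P p} \<in> sets (borel \<Otimes>\<^sub>M (borel :: real measure)) \<Longrightarrow>
   {p. P p} \<in> sets (borel :: (real \<times> real) measure)"
  unfolding borel_prod by (simp add: space_borel)

lemma measurable_fst_snd_borel:
  assumes "sets \<gamma> = sets (borel :: (real \<times> real) measure)"
  shows "fst \<in> borel_measurable \<gamma>" "snd \<in> borel_measurable \<gamma>"
  using measurable_fst[of borel borel] measurable_snd[of borel borel]
  by (simp_all add: measurable_cong_sets[OF assms[unfolded borel_prod[symmetric]] refl])

lemma cdf_distr:
  assumes "f \<in> borel_measurable M"
  shows "cdf (distr M borel f) x = measure M {\<omega> \<in> space M. f \<omega> \<le> x}"
  unfolding cdf_def using assms by (simp add: measure_distr vimage_def Int_def conj_commute)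

text \<open>Integrating the indicator of \<open>crossing a b\<close> over \<open>(a, b)\<close> gives \<open>(x - y)\<^sup>2\<close>, so the
  transport cost of a coupling is the integral of the masses it gives to these sets; each mass is
  bounded below in terms of the marginal CDFs alone, with equality for the quantile coupling.\<close>
definition crossing :: "real \<Rightarrow> real \<Rightarrow> (real \<times> real) set" where
  "crossing a b = {p. min (fst p) (snd p) \<le> a \<and> a < max (fst p) (snd p) \<and>
                      min (fst p) (snd p) \<le> b \<and> b < max (fst p) (snd p)}"

lemma crossing_in_sets_borel [measurable]: "crossing a b \<in> sets borel"
  unfolding crossing_def by (rule sets_borel_pairI) measurable

lemma crossing_eq:
  "crossing a b = ({p. fst p \<le> min a b} - {p. snd p \<le> max a b}) \<union>
                  ({p. snd p \<le> min a b} - {p. fst p \<le> max a b})"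
  by (auto simp: crossing_def min_def max_def not_le)

lemma square_diff_eq_nn_integral_crossing:
  "ennreal ((x - y)\<^sup>2) = (\<integral>\<^sup>+z. indicator (crossing (fst z) (snd z)) (x, y) \<partial>(lborel \<Otimes>\<^sub>M lborel))"
proof -
  let ?I = "{min x y..<max x y}"
  have [measurable]: "(\<lambda>z. indicator (crossing (fst z) (snd z)) (x, y) :: ennreal)
      \<in> borel_measurable (lborel \<Otimes>\<^sub>M lborel)"
    unfolding crossing_def indicator_def by measurable
  have "(\<integral>\<^sup>+z. indicator (crossing (fst z) (snd z)) (x, y) \<partial>(lborel \<Otimes>\<^sub>M lborel)) =
        (\<integral>\<^sup>+a. \<integral>\<^sup>+b. indicator ?I a * indicator ?I b \<partial>lborel \<partial>lborel)"
    by (subst lborel.nn_integral_fst[symmetric])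
       (auto intro!: nn_integral_cong simp: crossing_def split: split_indicator)
  also have "\<dots> = ennreal (max x y - min x y) * ennreal (max x y - min x y)"
    by (simp add: nn_integral_cmult nn_integral_multc)
  also have "\<dots> = ennreal ((x - y)\<^sup>2)"
    by (simp add: ennreal_mult[symmetric] power2_eq_square max_def min_def algebra_simps)
  finally show ?thesis ..
qed

lemma nn_integral_square_diff_eq_crossing:
  assumes sets: "sets \<pi> = sets (borel :: (real \<times> real) measure)" and "finite_measure \<pi>"
  shows "(\<integral>\<^sup>+p. ennreal ((fst p - snd p)\<^sup>2) \<partial>\<pi>) =
         (\<integral>\<^sup>+z. emeasure \<pi> (crossing (fst z) (snd z)) \<partial>(lborel \<Otimes>\<^sub>M lborel))"
proof -
  interpret pair_sigma_finite \<pi> "lborel \<Otimes>\<^sub>M lborel"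
    by (intro pair_sigma_finite.intro finite_measure.axioms(1)[OF assms(2)]
        sigma_finite_pair_measure lborel.sigma_finite_measure_axioms)
  have [measurable_cong]: "sets \<pi> = sets (borel \<Otimes>\<^sub>M (borel :: real measure))"
    unfolding borel_prod by (rule sets)
  have "(\<lambda>(p, z). indicator (crossing (fst z) (snd z)) p :: ennreal)
      \<in> borel_measurable (\<pi> \<Otimes>\<^sub>M (lborel \<Otimes>\<^sub>M lborel))"
    unfolding crossing_def indicator_def by measurable
  then have "(\<integral>\<^sup>+p. \<integral>\<^sup>+z. indicator (crossing (fst z) (snd z)) p \<partial>(lborel \<Otimes>\<^sub>M lborel) \<partial>\<pi>) =
             (\<integral>\<^sup>+z. \<integral>\<^sup>+p. indicator (crossing (fst z) (snd z)) p \<partial>\<pi> \<partial>(lborel \<Otimes>\<^sub>M lborel))"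
    by (rule Fubini'[symmetric])
  then show ?thesis
    by (simp add: square_diff_eq_nn_integral_crossing sets split_beta')
qed

definition crossing_bound :: "real measure \<Rightarrow> real measure \<Rightarrow> real \<Rightarrow> real \<Rightarrow> real" where
  "crossing_bound \<mu> \<nu> a b =
     max 0 (cdf \<mu> (min a b) - cdf \<nu> (max a b)) + max 0 (cdf \<nu> (min a b) - cdf \<mu> (max a b))"

lemma crossing_bound_le_emeasure_coupling:
  assumes \<gamma>: "\<gamma> \<in> couplings \<mu> \<nu>"
  shows "ennreal (crossing_bound \<mu> \<nu> a b) \<le> emeasure \<gamma> (crossing a b)"
proof -
  interpret prob_space \<gamma>
    using \<gamma> by (simp add: couplings_def)
  have sets: "sets \<gamma> = sets borel" and space: "space \<gamma> = UNIV"
    using \<gamma> sets_eq_imp_space_eq[of \<gamma> borel] by (auto simp: couplings_def)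
  have events: "{p. fst p \<le> x} \<in> events" "{p. snd p \<le> x} \<in> events" for x
    unfolding sets by (intro borel_closed closed_Collect_le continuous_intros)+
  have cdf_\<mu>: "cdf \<mu> x = prob {p. fst p \<le> x}" and cdf_\<nu>: "cdf \<nu> x = prob {p. snd p \<le> x}" for x
    using \<gamma> cdf_distr[OF measurable_fst_snd_borel(1)[OF sets]]
      cdf_distr[OF measurable_fst_snd_borel(2)[OF sets]]
    by (auto simp: couplings_def space)
  have prob_diff: "prob A - prob B \<le> prob (A - B)" if "A \<in> events" "B \<in> events" for A B
    using that finite_measure_Diff'[of A B] finite_measure_mono[of "A \<inter> B" B] by auto
  let ?m = "min a b" and ?M = "max a b"
  have "crossing_bound \<mu> \<nu> a b \<le>
        prob ({p. fst p \<le> ?m} - {p. snd p \<le> ?M}) + prob ({p. snd p \<le> ?m} - {p. fst p \<le> ?M})"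
    unfolding crossing_bound_def cdf_\<mu> cdf_\<nu>
    by (intro add_mono max.boundedI prob_diff events) auto
  also have "\<dots> = prob (crossing a b)"
    unfolding crossing_eq
    by (rule finite_measure_Union[symmetric]; (intro sets.Diff events)?; auto)
  finally show ?thesis
    by (simp add: emeasure_eq_measure)
qed

definition quantile_coupling :: "real measure \<Rightarrow> real measure \<Rightarrow> (real \<times> real) measure" where
  "quantile_coupling \<mu> \<nu> = distr uniform_01 borel (\<lambda>t. (gen_inv \<mu> t, gen_inv \<nu> t))"

lemma quantile_pair_measurable:
  assumes "real_distribution \<mu>" "real_distribution \<nu>"
  shows "(\<lambda>t. (gen_inv \<mu> t, gen_inv \<nu> t)) \<in> borel_measurable uniform_01"
  by (intro borel_measurable_Pair gen_inv_measurable_uniform_01 assms)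

lemma quantile_coupling_in_couplings:
  assumes "real_distribution \<mu>" "real_distribution \<nu>"
  shows "quantile_coupling \<mu> \<nu> \<in> couplings \<mu> \<nu>"
  using quantile_pair_measurable[OF assms] distr_uniform_01_gen_inv[OF assms(1)]
    distr_uniform_01_gen_inv[OF assms(2)]
  by (simp add: couplings_def quantile_coupling_def distr_distr measurable_fst_snd_borel comp_def
      prob_space.prob_space_distr[OF prob_space_uniform_01])

lemma emeasure_quantiles_separated_le:
  assumes "real_distribution \<mu>" "real_distribution \<nu>"
  shows "emeasure uniform_01 {t \<in> space uniform_01. gen_inv \<mu> t \<le> x \<and> \<not> gen_inv \<nu> t \<le> y}
           \<le> ennreal (max 0 (cdf \<mu> x - cdf \<nu> y))"
proof -
  let ?A = "{t \<in> space uniform_01. gen_inv \<mu> t \<le> x \<and> \<not> gen_inv \<nu> t \<le> y}"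
  have "?A \<subseteq> {cdf \<nu> y<..cdf \<mu> x}"
  proof
    fix t assume "t \<in> ?A"
    then have "0 < t" "t < 1" "gen_inv \<mu> t \<le> x" "\<not> gen_inv \<nu> t \<le> y"
      by (auto simp: space_restrict_space)
    then show "t \<in> {cdf \<nu> y<..cdf \<mu> x}"
      using gen_inv_le_iff[OF assms(1), of t x] gen_inv_le_iff[OF assms(2), of t y] by auto
  qed
  then have "emeasure uniform_01 ?A \<le> emeasure lborel {cdf \<nu> y<..cdf \<mu> x}"
    by (subst emeasure_restrict_space) (auto simp: space_restrict_space intro!: emeasure_mono)
  also have "\<dots> \<le> ennreal (max 0 (cdf \<mu> x - cdf \<nu> y))"
    by (cases "cdf \<nu> y \<le> cdf \<mu> x") simp_all
  finally show ?thesis .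
qed

lemma emeasure_quantile_coupling_crossing_le:
  assumes \<mu>: "real_distribution \<mu>" and \<nu>: "real_distribution \<nu>"
  shows "emeasure (quantile_coupling \<mu> \<nu>) (crossing a b) \<le> ennreal (crossing_bound \<mu> \<nu> a b)"
proof -
  let ?m = "min a b" and ?M = "max a b"
  note [measurable] = gen_inv_measurable_uniform_01[OF \<mu>] gen_inv_measurable_uniform_01[OF \<nu>]
  have "emeasure (quantile_coupling \<mu> \<nu>) (crossing a b) =
        emeasure uniform_01 ({t \<in> space uniform_01. gen_inv \<mu> t \<le> ?m \<and> \<not> gen_inv \<nu> t \<le> ?M} \<union>
                             {t \<in> space uniform_01. gen_inv \<nu> t \<le> ?m \<and> \<not> gen_inv \<mu> t \<le> ?M})"
    unfolding quantile_coupling_def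
    by (subst emeasure_distr[OF quantile_pair_measurable[OF \<mu> \<nu>] crossing_in_sets_borel])
       (auto simp: crossing_eq intro!: arg_cong[where f="emeasure uniform_01"])
  also have "\<dots> \<le> emeasure uniform_01 {t \<in> space uniform_01. gen_inv \<mu> t \<le> ?m \<and> \<not> gen_inv \<nu> t \<le> ?M}
                 + emeasure uniform_01 {t \<in> space uniform_01. gen_inv \<nu> t \<le> ?m \<and> \<not> gen_inv \<mu> t \<le> ?M}"
    by (rule emeasure_subadditive) measurable
  also have "\<dots> \<le> ennreal (crossing_bound \<mu> \<nu> a b)"
    unfolding crossing_bound_def ennreal_plus[OF max.cobounded1 max.cobounded1]
    by (intro add_mono emeasure_quantiles_separated_le \<mu> \<nu>)
  finally show ?thesis .
qed

lemma nn_integral_quantile_coupling: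
  assumes "real_distribution \<mu>" "real_distribution \<nu>"
  shows "(\<integral>\<^sup>+p. ennreal ((fst p - snd p)\<^sup>2) \<partial>quantile_coupling \<mu> \<nu>) =
         (\<integral>\<^sup>+t. ennreal ((gen_inv \<mu> t - gen_inv \<nu> t)\<^sup>2) \<partial>uniform_01)"
proof -
  have "(\<lambda>p. ennreal ((fst p - snd p)\<^sup>2)) \<in> borel_measurable (borel :: (real \<times> real) measure)"
    using measurable_fst_snd_borel[of borel] by measurable
  then show ?thesis
    unfolding quantile_coupling_def by (simp add: nn_integral_distr quantile_pair_measurable[OF assms])
qed

theorem W2sq_eq_quantile_distance:
  assumes \<mu>: "real_distribution \<mu>" and \<nu>: "real_distribution \<nu>"
  shows "W2sq \<mu> \<nu> = (\<integral>\<^sup>+t. ennreal ((gen_inv \<mu> t - gen_inv \<nu> t)\<^sup>2) \<partial>uniform_01)"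
proof (rule antisym)
  show "W2sq \<mu> \<nu> \<le> (\<integral>\<^sup>+t. ennreal ((gen_inv \<mu> t - gen_inv \<nu> t)\<^sup>2) \<partial>uniform_01)"
    unfolding W2sq_def nn_integral_quantile_coupling[OF assms, symmetric]
    by (rule INF_lower[OF quantile_coupling_in_couplings[OF assms]])
  have "(\<integral>\<^sup>+t. ennreal ((gen_inv \<mu> t - gen_inv \<nu> t)\<^sup>2) \<partial>uniform_01) \<le>
        (\<integral>\<^sup>+p. ennreal ((fst p - snd p)\<^sup>2) \<partial>\<gamma>)" if \<gamma>: "\<gamma> \<in> couplings \<mu> \<nu>" for \<gamma>
  proof -
    have finite: "finite_measure \<pi>" if "\<pi> \<in> couplings \<mu> \<nu>" for \<pi>
      using that by (auto simp: couplings_def prob_space_def)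
    note qc = quantile_coupling_in_couplings[OF assms]
    have "(\<integral>\<^sup>+t. ennreal ((gen_inv \<mu> t - gen_inv \<nu> t)\<^sup>2) \<partial>uniform_01) =
          (\<integral>\<^sup>+z. emeasure (quantile_coupling \<mu> \<nu>) (crossing (fst z) (snd z)) \<partial>(lborel \<Otimes>\<^sub>M lborel))"
      using qc finite[OF qc]
      by (simp add: nn_integral_quantile_coupling[OF assms, symmetric]
          nn_integral_square_diff_eq_crossing couplings_def)
    also have "\<dots> \<le> (\<integral>\<^sup>+z. emeasure \<gamma> (crossing (fst z) (snd z)) \<partial>(lborel \<Otimes>\<^sub>M lborel))"
      by (intro nn_integral_mono order.trans[OF emeasure_quantile_coupling_crossing_le[OF assms]
            crossing_bound_le_emeasure_coupling[OF \<gamma>]])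
    also have "\<dots> = (\<integral>\<^sup>+p. ennreal ((fst p - snd p)\<^sup>2) \<partial>\<gamma>)"
      using \<gamma> finite[OF \<gamma>] by (simp add: nn_integral_square_diff_eq_crossing couplings_def)
    finally show ?thesis .
  qed
  then show "(\<integral>\<^sup>+t. ennreal ((gen_inv \<mu> t - gen_inv \<nu> t)\<^sup>2) \<partial>uniform_01) \<le> W2sq \<mu> \<nu>"
    unfolding W2sq_def by (rule INF_greatest)
qed

lemma W2sq_distr_le:
  assumes N: "prob_space N" and [measurable]: "a \<in> borel_measurable N" "b \<in> borel_measurable N"
  shows "W2sq (distr N borel a) (distr N borel b) \<le> (\<integral>\<^sup>+t. ennreal ((a t - b t)\<^sup>2) \<partial>N)"
proof -
  let ?\<gamma> = "distr N borel (\<lambda>t. (a t, b t))"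
  have ab: "(\<lambda>t. (a t, b t)) \<in> borel_measurable N"
    by (intro borel_measurable_Pair) measurable
  have "?\<gamma> \<in> couplings (distr N borel a) (distr N borel b)"
    using ab by (simp add: couplings_def distr_distr measurable_fst_snd_borel comp_def
        prob_space.prob_space_distr[OF N])
  then have "W2sq (distr N borel a) (distr N borel b) \<le> (\<integral>\<^sup>+p. ennreal ((fst p - snd p)\<^sup>2) \<partial>?\<gamma>)"
    unfolding W2sq_def by (rule INF_lower)
  also have "\<dots> = (\<integral>\<^sup>+t. ennreal ((a t - b t)\<^sup>2) \<partial>N)"
    using measurable_fst_snd_borel[of borel] ab by (simp add: nn_integral_distr)
  finally show ?thesis .
qed

lemma W2sq_le_eps:
  assumes "real_distribution \<mu>" "real_distribution \<nu>" "real_distribution \<rho>" "0 < e"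
  shows "W2sq \<mu> \<rho> \<le> ennreal (1 + e) * W2sq \<mu> \<nu> + ennreal (1 + 1 / e) * W2sq \<nu> \<rho>"
  unfolding W2sq_eq_quantile_distance[OF assms(1,3)] W2sq_eq_quantile_distance[OF assms(1,2)]
    W2sq_eq_quantile_distance[OF assms(2,3)]
  by (intro nn_integral_power2_diff_le_eps gen_inv_measurable_uniform_01 assms)

lemma real_distribution_P2: "\<nu> \<in> P2 \<Longrightarrow> real_distribution \<nu>"
  unfolding P2_def real_distribution_def real_distribution_axioms_def by auto

section \<open>Pareto frontier under a square-root trade-off\<close>

lemma pareto_frontier_sqrt_tradeoff:
  fixes R U :: "'f \<Rightarrow> ennreal" and c :: "real \<Rightarrow> 'f"
  assumes v: "0 \<le> v"
    and curve: "\<And>\<alpha>. \<alpha> \<in> {0..1} \<Longrightarrow> c \<alpha> \<in> F"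
    and curve_R: "\<And>\<alpha>. \<alpha> \<in> {0..1} \<Longrightarrow> R (c \<alpha>) = ennreal ((1 - sqrt \<alpha>)\<^sup>2 * v)"
    and curve_U: "\<And>\<alpha>. \<alpha> \<in> {0..1} \<Longrightarrow> U (c \<alpha>) = ennreal (\<alpha> * v)"
    and tradeoff: "\<And>f r u. f \<in> F \<Longrightarrow> R f = ennreal r \<Longrightarrow> U f = ennreal u \<Longrightarrow> 0 \<le> r \<Longrightarrow> 0 \<le> u \<Longrightarrow>
                     sqrt v \<le> sqrt r + sqrt u"
  shows "{f \<in> F. \<not> (\<exists>g\<in>F. (R g \<le> R f \<and> U g < U f) \<or> (R g < R f \<and> U g \<le> U f))} =
         {f \<in> F. \<exists>\<alpha>\<in>{0..1}. R f = R (c \<alpha>) \<and> U f = U (c \<alpha>)}"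
proof -
  have tight: "R f = R (c \<alpha>) \<and> U f = U (c \<alpha>)"
    if f: "f \<in> F" and \<alpha>: "\<alpha> \<in> {0..1}" and "R f \<le> R (c \<alpha>)" "U f \<le> U (c \<alpha>)" for f \<alpha>
    using ennreal_tradeoff_curve_tight[OF \<alpha> v tradeoff[OF f]] that curve_R[OF \<alpha>] curve_U[OF \<alpha>]
    by simp
  show ?thesis
  proof (intro set_eqI iffI)
    fix f
    assume "f \<in> {f \<in> F. \<not> (\<exists>g\<in>F. (R g \<le> R f \<and> U g < U f) \<or> (R g < R f \<and> U g \<le> U f))}"
    then have f: "f \<in> F"
      and undominated: "\<And>g. g \<in> F \<Longrightarrow> \<not> ((R g \<le> R f \<and> U g < U f) \<or> (R g < R f \<and> U g \<le> U f))"
      by auto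
    \<comment> \<open>compare \<open>f\<close> with the curve point of the same unfairness, or with \<open>c 1\<close> if there is none\<close>
    have "\<exists>\<alpha>\<in>{0..1}. R f = R (c \<alpha>) \<and> U f = U (c \<alpha>)"
    proof (cases "U f < ennreal v")
      case True
      then obtain u where u: "U f = ennreal u" "0 \<le> u" "u < v"
        using v by (cases "U f") (auto simp: ennreal_less_iff)
      define \<alpha> where "\<alpha> = u / v"
      have \<alpha>: "\<alpha> \<in> {0..1}" and U_eq: "U (c \<alpha>) = U f"
        using u curve_U[of \<alpha>] by (auto simp: \<alpha>_def)
      have "R f \<le> R (c \<alpha>)"
        using undominated[OF curve[OF \<alpha>]] unfolding U_eq by (simp add: not_less)
      then show ?thesis
        using tight[OF f \<alpha>] U_eq \<alpha> by auto
    next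
      case False
      have one: "(1::real) \<in> {0..1}"
        by simp
      then have "U f = U (c 1)" "R f = R (c 1)"
        using undominated[OF curve[OF one]] curve_R[OF one] curve_U[OF one] False by auto
      then show ?thesis
        using one by blast
    qed
    then show "f \<in> {f \<in> F. \<exists>\<alpha>\<in>{0..1}. R f = R (c \<alpha>) \<and> U f = U (c \<alpha>)}"
      using f by blast
  next
    fix f
    assume "f \<in> {f \<in> F. \<exists>\<alpha>\<in>{0..1}. R f = R (c \<alpha>) \<and> U f = U (c \<alpha>)}"
    then obtain \<alpha> where f: "f \<in> F" and \<alpha>: "\<alpha> \<in> {0..1}" and on_curve: "R f = R (c \<alpha>)" "U f = U (c \<alpha>)"
      by auto
    have "\<not> ((R g \<le> R f \<and> U g < U f) \<or> (R g < R f \<and> U g \<le> U f))" if "g \<in> F" for g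
      using tight[OF that \<alpha>] unfolding on_curve by (auto simp: less_le)
    then show "f \<in> {f \<in> F. \<not> (\<exists>g\<in>F. (R g \<le> R f \<and> U g < U f) \<or> (R g < R f \<and> U g \<le> U f))}"
      using f by blast
  qed
qed

locale fair_regression =
  fixes M :: "'a measure" and X :: "'a \<Rightarrow> 'x::euclidean_space" and S :: "'a \<Rightarrow> 'k::finite"
    and fstar :: "'x \<Rightarrow> 'k \<Rightarrow> real" and w :: "'k \<Rightarrow> real"
  assumes prob_space_M: "prob_space M"
    and X_measurable: "X \<in> borel_measurable M"
    and S_measurable: "S \<in> measurable M (count_space UNIV)"
    and group_prob_pos: "\<forall>s. measure M {\<omega> \<in> space M. S \<omega> = s} > 0"
    and fstar_measurable: "pred_measurable fstar"
    and w_nonneg: "\<forall>s. w s \<ge> 0"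
    and w_sum: "(\<Sum>s\<in>UNIV. w s) = 1"
    and assumption_A: "assumption_A M X S fstar"
begin

abbreviation cond :: "'k \<Rightarrow> 'a measure" where
  "cond s \<equiv> cond_meas M S s"

lemma group_in_sets: "{\<omega> \<in> space M. S \<omega> = s} \<in> sets M"
proof -
  have "S -` {s} \<inter> space M \<in> sets M"
    by (rule measurable_sets[OF S_measurable]) simp
  moreover have "S -` {s} \<inter> space M = {\<omega> \<in> space M. S \<omega> = s}"
    by auto
  ultimately show ?thesis
    by simp
qed

lemma prob_space_cond: "prob_space (cond s)"
proof -
  interpret prob_space M
    by (rule prob_space_M)
  show ?thesis
    unfolding cond_meas_def using group_prob_pos[rule_format, of s]
    by (intro prob_space_uniform_measure) (auto simp: emeasure_eq_measure)
qed

lemma sets_cond: "sets (cond s) = sets M"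
  by (simp add: cond_meas_def)

lemma AE_cond: "AE \<omega> in cond s. S \<omega> = s"
  unfolding cond_meas_def by (rule AE_uniform_measureI[OF group_in_sets]) auto

lemma pred_comp_measurable:
  assumes "pred_measurable f"
  shows "(\<lambda>\<omega>. f (X \<omega>) s) \<in> borel_measurable M"
proof -
  have "(\<lambda>x. f x s) \<in> borel_measurable borel"
    using assms by (simp add: pred_measurable_def)
  then show ?thesis
    using measurable_compose[OF X_measurable] by blast
qed

lemma pred_comp_measurable_cond:
  assumes "pred_measurable f"
  shows "(\<lambda>\<omega>. f (X \<omega>) s') \<in> borel_measurable (cond s)"
  using pred_comp_measurable[OF assms] by (simp add: measurable_cong_sets[OF sets_cond refl])

lemma fstar_section_measurable [measurable]: "(\<lambda>x. fstar x s) \<in> borel_measurable borel"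
  using fstar_measurable by (simp add: pred_measurable_def)

lemma fstar_measurable_cond [measurable]: "(\<lambda>\<omega>. fstar (X \<omega>) s) \<in> borel_measurable (cond s')"
  by (rule pred_comp_measurable_cond[OF fstar_measurable])

lemma cond_law_eq_distr:
  assumes "pred_measurable f"
  shows "cond_law M X S f s = distr (cond s) borel (\<lambda>\<omega>. f (X \<omega>) s)"
proof -
  have "(\<lambda>\<omega>. f (X \<omega>) (S \<omega>)) \<in> borel_measurable M"
    by (rule measurable_compose_countable'[where I=UNIV and g=S and f="\<lambda>i \<omega>. f (X \<omega>) i"])
       (auto intro: pred_comp_measurable[OF assms] S_measurable)
  then have "(\<lambda>\<omega>. f (X \<omega>) (S \<omega>)) \<in> borel_measurable (cond s)"
    by (simp add: measurable_cong_sets[OF sets_cond refl])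
  then show ?thesis
    unfolding cond_law_def
    by (rule distr_cong_AE[OF refl refl _ _ pred_comp_measurable_cond[OF assms], rotated])
       (rule AE_mp[OF AE_cond], simp)
qed

lemma real_distribution_cond_law:
  assumes "pred_measurable f"
  shows "real_distribution (cond_law M X S f s)"
  unfolding cond_law_eq_distr[OF assms]
  by (rule prob_space.real_distribution_distr[OF prob_space_cond pred_comp_measurable_cond[OF assms]])

lemma risk_eq:
  "risk M X S w fstar f =
     (\<Sum>s\<in>UNIV. ennreal (w s) * (\<integral>\<^sup>+\<omega>. ennreal ((f (X \<omega>) s - fstar (X \<omega>) s)\<^sup>2) \<partial>cond s))"
  unfolding risk_def
  by (rule sum.cong[OF refl], rule arg_cong2[where f="(*)", OF refl], rule nn_integral_cong_AE)
     (rule AE_mp[OF AE_cond], simp)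

lemma weighted_W2sq_le_risk:
  assumes "pred_measurable f"
  shows "(\<Sum>s\<in>UNIV. ennreal (w s) * W2sq (cond_law M X S fstar s) (cond_law M X S f s))
           \<le> risk M X S w fstar f"
  unfolding risk_eq
proof (intro sum_mono mult_left_mono)
  fix s
  have "W2sq (cond_law M X S fstar s) (cond_law M X S f s) \<le>
        (\<integral>\<^sup>+\<omega>. ennreal ((fstar (X \<omega>) s - f (X \<omega>) s)\<^sup>2) \<partial>cond s)"
    unfolding cond_law_eq_distr[OF fstar_measurable] cond_law_eq_distr[OF assms]
    by (intro W2sq_distr_le prob_space_cond pred_comp_measurable_cond fstar_measurable assms)
  also have "\<dots> = (\<integral>\<^sup>+\<omega>. ennreal ((f (X \<omega>) s - fstar (X \<omega>) s)\<^sup>2) \<partial>cond s)"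
    by (simp only: power2_commute)
  finally show "W2sq (cond_law M X S fstar s) (cond_law M X S f s) \<le> \<dots>" .
qed simp

subsection \<open>The barycentre of the group quantile functions\<close>

abbreviation nu_star :: "'k \<Rightarrow> real measure" where
  "nu_star s \<equiv> cond_law M X S fstar s"

abbreviation q :: "'k \<Rightarrow> real \<Rightarrow> real" where
  "q s \<equiv> gen_inv (nu_star s)"

lemma real_distribution_nu_star: "real_distribution (nu_star s)"
  by (rule real_distribution_cond_law[OF fstar_measurable])

lemma q_measurable [measurable]: "q s \<in> borel_measurable borel"
  by (rule borel_measurable_gen_inv[OF real_distribution_nu_star])

lemma q_measurable_uniform_01 [measurable]: "q s \<in> borel_measurable uniform_01"
  by (rule gen_inv_measurable_uniform_01[OF real_distribution_nu_star])

definition bary :: "real \<Rightarrow> real" where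
  "bary t = (\<Sum>s\<in>UNIV. w s * q s t)"

definition var_bary :: ennreal where
  "var_bary = (\<Sum>s\<in>UNIV. ennreal (w s) * (\<integral>\<^sup>+t. ennreal ((q s t - bary t)\<^sup>2) \<partial>uniform_01))"

definition bary_law :: "real measure" where
  "bary_law = distr uniform_01 borel bary"

lemma bary_measurable [measurable]: "bary \<in> borel_measurable borel"
  unfolding bary_def[abs_def] by measurable

lemma bary_measurable_uniform_01 [measurable]: "bary \<in> borel_measurable uniform_01"
  by (rule measurable_restrict_space1) (simp add: measurable_cong_sets[OF sets_lborel refl])

lemma weighted_sum_square_diff_bary:
  "(\<Sum>s\<in>UNIV. w s * (q s t - y)\<^sup>2) = (\<Sum>s\<in>UNIV. w s * (q s t - bary t)\<^sup>2) + (bary t - y)\<^sup>2"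
  unfolding bary_def by (rule weighted_sum_square_diff_decomp) (simp_all add: w_sum)

lemma weighted_sum_square_q_eq:
  "(\<Sum>s\<in>UNIV. w s * (q s t)\<^sup>2) = (\<Sum>s\<in>UNIV. w s * (q s t - bary t)\<^sup>2) + (bary t)\<^sup>2"
  using weighted_sum_square_diff_bary[of t 0] by simp

lemma weighted_sum_square_q_bary_nonneg: "0 \<le> (\<Sum>s\<in>UNIV. w s * (q s t - bary t)\<^sup>2)"
  using w_nonneg by (intro sum_nonneg mult_nonneg_nonneg) auto

lemma var_bary_eq_nn_integral:
  "var_bary = (\<integral>\<^sup>+t. ennreal (\<Sum>s\<in>UNIV. w s * (q s t - bary t)\<^sup>2) \<partial>uniform_01)"
  unfolding var_bary_def by (rule nn_integral_weighted_sum) (simp_all add: w_nonneg)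

lemma weighted_second_moment_finite:
  "(\<integral>\<^sup>+t. ennreal (\<Sum>s\<in>UNIV. w s * (q s t)\<^sup>2) \<partial>uniform_01) < \<top>"
proof -
  have "(\<integral>\<^sup>+t. ennreal ((q s t)\<^sup>2) \<partial>uniform_01) = (\<integral>\<^sup>+y. ennreal (y\<^sup>2) \<partial>nu_star s)" for s
    by (subst distr_uniform_01_gen_inv[OF real_distribution_nu_star, symmetric])
       (simp add: nn_integral_distr)
  moreover have "(\<integral>\<^sup>+y. ennreal (y\<^sup>2) \<partial>nu_star s) < \<top>" for s
    using assumption_A by (simp add: assumption_A_def)
  ultimately have "(\<Sum>s\<in>UNIV. ennreal (w s) * (\<integral>\<^sup>+t. ennreal ((q s t)\<^sup>2) \<partial>uniform_01)) < \<top>"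
    by (simp add: ennreal_mult_less_top less_top)
  then show ?thesis
    by (simp add: nn_integral_weighted_sum w_nonneg)
qed

lemma var_bary_finite: "var_bary < \<top>"
proof -
  have "var_bary \<le> (\<integral>\<^sup>+t. ennreal (\<Sum>s\<in>UNIV. w s * (q s t)\<^sup>2) \<partial>uniform_01)"
    unfolding var_bary_eq_nn_integral
    by (intro nn_integral_mono ennreal_leI) (simp add: weighted_sum_square_q_eq)
  then show ?thesis
    using weighted_second_moment_finite by (rule le_less_trans)
qed

lemma ennreal_enn2real_var_bary: "ennreal (enn2real var_bary) = var_bary"
  using var_bary_finite by simp

lemma bary_law_in_P2: "bary_law \<in> P2"
proof -
  have "(\<integral>\<^sup>+y. ennreal (y\<^sup>2) \<partial>bary_law) = (\<integral>\<^sup>+t. ennreal ((bary t)\<^sup>2) \<partial>uniform_01)"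
    unfolding bary_law_def by (simp add: nn_integral_distr)
  also have "\<dots> \<le> (\<integral>\<^sup>+t. ennreal (\<Sum>s\<in>UNIV. w s * (q s t)\<^sup>2) \<partial>uniform_01)"
    using weighted_sum_square_q_bary_nonneg
    by (intro nn_integral_mono ennreal_leI) (simp add: weighted_sum_square_q_eq)
  also have "\<dots> < \<top>"
    by (rule weighted_second_moment_finite)
  finally show ?thesis
    using prob_space.prob_space_distr[OF prob_space_uniform_01 bary_measurable_uniform_01]
    by (simp add: P2_def bary_law_def)
qed

lemma var_bary_le_W2sq:
  assumes "real_distribution \<nu>"
  shows "var_bary \<le> (\<Sum>s\<in>UNIV. ennreal (w s) * W2sq (nu_star s) \<nu>)"
proof -
  note [measurable] = gen_inv_measurable_uniform_01[OF assms]
  have "var_bary \<le> (\<integral>\<^sup>+t. ennreal (\<Sum>s\<in>UNIV. w s * (q s t - gen_inv \<nu> t)\<^sup>2) \<partial>uniform_01)"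
    unfolding var_bary_eq_nn_integral
    by (intro nn_integral_mono ennreal_leI) (simp add: weighted_sum_square_diff_bary[of _ "gen_inv \<nu> _"])
  also have "\<dots> = (\<Sum>s\<in>UNIV. ennreal (w s) * W2sq (nu_star s) \<nu>)"
    by (simp add: W2sq_eq_quantile_distance[OF real_distribution_nu_star assms]
        nn_integral_weighted_sum w_nonneg)
  finally show ?thesis .
qed

definition transport :: "'k \<Rightarrow> real \<Rightarrow> real" where
  "transport s y = bary (cdf (nu_star s) y)"

lemma transport_measurable [measurable]: "transport s \<in> borel_measurable borel"
proof -
  have [measurable]: "cdf (nu_star s) \<in> borel_measurable borel"
    using finite_borel_measure.cdf_nondecreasing[OF
        real_distribution.finite_borel_measure_M[OF real_distribution_nu_star]]
    by (intro borel_measurable_mono monoI)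
  show ?thesis
    unfolding transport_def[abs_def] by measurable
qed

text \<open>Assumption (A) makes \<open>cdf (nu_star s)\<close> a left inverse of \<open>q s\<close> on \<open>(0, 1)\<close>.\<close>
lemma transport_q: "t \<in> space uniform_01 \<Longrightarrow> transport s (q s t) = bary t"
  using assumption_A
  by (simp add: transport_def space_restrict_space assumption_A_def cdf_gen_inv[OF real_distribution_nu_star])

lemma distr_fstar_cond: "distr (cond s) borel (\<lambda>\<omega>. fstar (X \<omega>) s) = distr uniform_01 borel (q s)"
  by (rule trans[OF cond_law_eq_distr[OF fstar_measurable, symmetric]
        distr_uniform_01_gen_inv[OF real_distribution_nu_star, symmetric]])

lemma distr_transport_cond: "distr (cond s) borel (\<lambda>\<omega>. transport s (fstar (X \<omega>) s)) = bary_law"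
proof -
  have "distr (cond s) borel (\<lambda>\<omega>. transport s (fstar (X \<omega>) s)) =
        distr (distr (cond s) borel (\<lambda>\<omega>. fstar (X \<omega>) s)) borel (transport s)"
    by (simp add: distr_distr comp_def)
  also have "\<dots> = distr uniform_01 borel (\<lambda>t. transport s (q s t))"
    by (simp add: distr_fstar_cond distr_distr comp_def)
  also have "\<dots> = bary_law"
    unfolding bary_law_def by (rule distr_cong) (simp_all add: transport_q)
  finally show ?thesis .
qed

lemma nn_integral_transport_cost:
  assumes "0 \<le> c"
  shows "(\<integral>\<^sup>+\<omega>. ennreal (c * (fstar (X \<omega>) s - transport s (fstar (X \<omega>) s))\<^sup>2) \<partial>cond s) =
         ennreal c * (\<integral>\<^sup>+t. ennreal ((q s t - bary t)\<^sup>2) \<partial>uniform_01)"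
proof -
  let ?cost = "\<lambda>y. ennreal (c * (y - transport s y)\<^sup>2)"
  have "(\<integral>\<^sup>+\<omega>. ?cost (fstar (X \<omega>) s) \<partial>cond s) = (\<integral>\<^sup>+y. ?cost y \<partial>distr (cond s) borel (\<lambda>\<omega>. fstar (X \<omega>) s))"
    by (simp add: nn_integral_distr)
  also have "\<dots> = (\<integral>\<^sup>+t. ?cost (q s t) \<partial>uniform_01)"
    by (simp add: distr_fstar_cond nn_integral_distr)
  also have "\<dots> = (\<integral>\<^sup>+t. ennreal c * ennreal ((q s t - bary t)\<^sup>2) \<partial>uniform_01)"
    using assms by (intro nn_integral_cong) (simp add: transport_q ennreal_mult)
  also have "\<dots> = ennreal c * (\<integral>\<^sup>+t. ennreal ((q s t - bary t)\<^sup>2) \<partial>uniform_01)"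
    by (simp add: nn_integral_cmult)
  finally show ?thesis .
qed

lemma f_alpha_eq:
  "f_alpha M X S w fstar \<alpha> x s = sqrt \<alpha> * fstar x s + (1 - sqrt \<alpha>) * transport s (fstar x s)"
  unfolding f_alpha_def transport_def bary_def ..

lemma pred_measurable_f_alpha: "pred_measurable (f_alpha M X S w fstar \<alpha>)"
  unfolding pred_measurable_def f_alpha_eq by measurable

lemma risk_f_alpha:
  assumes "0 \<le> \<alpha>"
  shows "risk M X S w fstar (f_alpha M X S w fstar \<alpha>) = ennreal ((1 - sqrt \<alpha>)\<^sup>2 * enn2real var_bary)"
proof -
  have interpolation: "(a * y + (1 - a) * z - y)\<^sup>2 = (1 - a)\<^sup>2 * (y - z)\<^sup>2" for a y z :: real
    by (simp add: power2_eq_square algebra_simps)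
  have "(f_alpha M X S w fstar \<alpha> x s - fstar x s)\<^sup>2 = (1 - sqrt \<alpha>)\<^sup>2 * (fstar x s - transport s (fstar x s))\<^sup>2"
    for x s
    unfolding f_alpha_eq by (rule interpolation)
  then have "risk M X S w fstar (f_alpha M X S w fstar \<alpha>) =
             (\<Sum>s\<in>UNIV. ennreal (w s) * (ennreal ((1 - sqrt \<alpha>)\<^sup>2) *
                (\<integral>\<^sup>+t. ennreal ((q s t - bary t)\<^sup>2) \<partial>uniform_01)))"
    by (simp add: risk_eq nn_integral_transport_cost)
  also have "\<dots> = ennreal ((1 - sqrt \<alpha>)\<^sup>2) * var_bary"
    unfolding var_bary_def by (simp add: sum_distrib_left algebra_simps)
  finally show ?thesis
    by (simp add: ennreal_mult ennreal_enn2real_var_bary)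
qed

lemma unfairness_f_alpha_le:
  assumes "0 \<le> \<alpha>"
  shows "unfairness M X S w (f_alpha M X S w fstar \<alpha>) \<le> ennreal (\<alpha> * enn2real var_bary)"
proof -
  let ?f = "f_alpha M X S w fstar \<alpha>"
  have interpolation: "(a * y + (1 - a) * z - z)\<^sup>2 = a\<^sup>2 * (y - z)\<^sup>2" for a y z :: real
    by (simp add: power2_eq_square algebra_simps)
  have "(?f x s - transport s (fstar x s))\<^sup>2 = \<alpha> * (fstar x s - transport s (fstar x s))\<^sup>2" for x s
    unfolding f_alpha_eq interpolation using assms by simp
  \<comment> \<open>couple the law of \<open>f\<^sup>*\<^sub>\<alpha>\<close> with \<open>bary_law\<close> through \<open>transport s\<close>\<close>
  then have "W2sq (cond_law M X S ?f s) bary_law \<le>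
             ennreal \<alpha> * (\<integral>\<^sup>+t. ennreal ((q s t - bary t)\<^sup>2) \<partial>uniform_01)" for s
    using W2sq_distr_le[OF prob_space_cond, of "\<lambda>\<omega>. ?f (X \<omega>) s" s "\<lambda>\<omega>. transport s (fstar (X \<omega>) s)"]
      pred_comp_measurable_cond[OF pred_measurable_f_alpha]
    by (simp add: cond_law_eq_distr[OF pred_measurable_f_alpha] distr_transport_cond
        nn_integral_transport_cost assms)
  then have "unfairness M X S w ?f \<le> (\<Sum>s\<in>UNIV. ennreal (w s) * (ennreal \<alpha> *
               (\<integral>\<^sup>+t. ennreal ((q s t - bary t)\<^sup>2) \<partial>uniform_01)))"
    unfolding unfairness_def
    by (intro INF_lower2[OF bary_law_in_P2] sum_mono mult_left_mono) simp_all
  also have "\<dots> = ennreal \<alpha> * var_bary"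
    unfolding var_bary_def by (simp add: sum_distrib_left algebra_simps)
  finally show ?thesis
    by (simp add: ennreal_mult assms ennreal_enn2real_var_bary)
qed

lemma var_bary_le_eps:
  assumes f: "pred_measurable f" and \<nu>: "\<nu> \<in> P2" and e: "0 < e"
  shows "var_bary \<le> ennreal (1 + e) * risk M X S w fstar f +
           ennreal (1 + 1 / e) * (\<Sum>s\<in>UNIV. ennreal (w s) * W2sq (cond_law M X S f s) \<nu>)"
proof -
  have "var_bary \<le> (\<Sum>s\<in>UNIV. ennreal (w s) * W2sq (nu_star s) \<nu>)"
    by (rule var_bary_le_W2sq[OF real_distribution_P2[OF \<nu>]])
  also have "\<dots> \<le> (\<Sum>s\<in>UNIV. ennreal (w s) * (ennreal (1 + e) * W2sq (nu_star s) (cond_law M X S f s) +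
                     ennreal (1 + 1 / e) * W2sq (cond_law M X S f s) \<nu>))"
    by (intro sum_mono mult_left_mono W2sq_le_eps real_distribution_nu_star
        real_distribution_cond_law f real_distribution_P2[OF \<nu>] e) simp
  also have "\<dots> = ennreal (1 + e) * (\<Sum>s\<in>UNIV. ennreal (w s) * W2sq (nu_star s) (cond_law M X S f s)) +
                   ennreal (1 + 1 / e) * (\<Sum>s\<in>UNIV. ennreal (w s) * W2sq (cond_law M X S f s) \<nu>)"
    by (simp add: sum_distrib_left sum.distrib algebra_simps)
  also have "\<dots> \<le> ennreal (1 + e) * risk M X S w fstar f +
                   ennreal (1 + 1 / e) * (\<Sum>s\<in>UNIV. ennreal (w s) * W2sq (cond_law M X S f s) \<nu>)"
    by (intro add_mono mult_left_mono weighted_W2sq_le_risk f order.refl) simp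
  finally show ?thesis .
qed

lemma sqrt_var_bary_le_W2sq:
  assumes f: "pred_measurable f" and \<nu>: "\<nu> \<in> P2"
    and r: "risk M X S w fstar f = ennreal r" "0 \<le> r"
    and \<phi>: "(\<Sum>s\<in>UNIV. ennreal (w s) * W2sq (cond_law M X S f s) \<nu>) = ennreal \<phi>" "0 \<le> \<phi>"
  shows "sqrt (enn2real var_bary) \<le> sqrt r + sqrt \<phi>"
proof (rule sqrt_le_add_sqrt_of_eps[OF r(2) \<phi>(2)])
  fix e :: real
  assume e: "0 < e"
  have "ennreal (enn2real var_bary) \<le> ennreal (1 + e) * ennreal r + ennreal (1 + 1 / e) * ennreal \<phi>"
    using var_bary_le_eps[OF f \<nu> e] r \<phi> by (simp add: ennreal_enn2real_var_bary)
  also have "\<dots> = ennreal ((1 + e) * r + (1 + 1 / e) * \<phi>)"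
    using e r \<phi> by (simp add: ennreal_plus ennreal_mult)
  finally have "ennreal (enn2real var_bary) \<le> ennreal ((1 + e) * r + (1 + 1 / e) * \<phi>)" .
  moreover have "0 \<le> (1 + e) * r + (1 + 1 / e) * \<phi>"
    using e r \<phi> by simp
  ultimately show "enn2real var_bary \<le> (1 + e) * r + (1 + 1 / e) * \<phi>"
    using ennreal_le_iff by blast
qed

lemma sqrt_var_bary_le:
  assumes f: "pred_measurable f" and r: "risk M X S w fstar f = ennreal r" "0 \<le> r"
    and u: "unfairness M X S w f = ennreal u" "0 \<le> u"
  shows "sqrt (enn2real var_bary) \<le> sqrt r + sqrt u"
proof -
  let ?d = "max 0 (sqrt (enn2real var_bary) - sqrt r)"
  have "ennreal (?d\<^sup>2) \<le> (\<Sum>s\<in>UNIV. ennreal (w s) * W2sq (cond_law M X S f s) \<nu>)"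
    if \<nu>: "\<nu> \<in> P2" for \<nu>
  proof (cases "\<Sum>s\<in>UNIV. ennreal (w s) * W2sq (cond_law M X S f s) \<nu>" rule: ennreal_cases)
    case (real \<phi>)
    then have "?d \<le> sqrt \<phi>"
      using sqrt_var_bary_le_W2sq[OF f \<nu> r] by simp
    then have "?d\<^sup>2 \<le> \<phi>"
      using \<open>0 \<le> \<phi>\<close> by (metis max.cobounded1 power_mono real_sqrt_pow2)
    then show ?thesis
      by (simp add: real ennreal_leI)
  qed (simp only: top_greatest)
  then have "ennreal (?d\<^sup>2) \<le> unfairness M X S w f"
    unfolding unfairness_def by (rule INF_greatest)
  then have "?d\<^sup>2 \<le> u"
    using u by (simp add: ennreal_le_iff)
  then have "?d \<le> sqrt u"
    by (rule real_le_rsqrt)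
  then show ?thesis
    by simp
qed

lemma unfairness_f_alpha:
  assumes \<alpha>: "\<alpha> \<in> {0..1}"
  shows "unfairness M X S w (f_alpha M X S w fstar \<alpha>) = ennreal (\<alpha> * enn2real var_bary)"
  using ennreal_tradeoff_curve_tight[OF \<alpha> enn2real_nonneg
      sqrt_var_bary_le[OF pred_measurable_f_alpha] _ unfairness_f_alpha_le] \<alpha>
  by (simp add: risk_f_alpha)

end

theorem proposition3:
  fixes M :: "'a measure" and X :: "'a \<Rightarrow> real ^ 'p" and S :: "'a \<Rightarrow> 'k::finite"
    and fstar :: "real ^ 'p \<Rightarrow> 'k \<Rightarrow> real" and w :: "'k \<Rightarrow> real"
  assumes "prob_space M"
    and "X \<in> borel_measurable M"
    and "S \<in> measurable M (count_space UNIV)"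
    and "\<forall>s. measure M {\<omega> \<in> space M. S \<omega> = s} > 0"
    and "pred_measurable fstar"
    and "\<forall>s. w s \<ge> 0" and "(\<Sum>s\<in>UNIV. w s) = 1"
    and "assumption_A M X S fstar"
  shows "{f. pareto_efficient M X S w fstar f} =
         {f. pred_measurable f \<and>
             (\<exists>\<alpha>\<in>{0..1}. risk M X S w fstar f = risk M X S w fstar (f_alpha M X S w fstar \<alpha>) \<and>
                          unfairness M X S w f = unfairness M X S w (f_alpha M X S w fstar \<alpha>))}"
proof -
  interpret fair_regression M X S fstar w
    by (rule fair_regression.intro[OF assms])
  let ?R = "risk M X S w fstar" and ?U = "unfairness M X S w" and ?F = "{f. pred_measurable f}"
  have "{f. pareto_efficient M X S w fstar f} =
        {f \<in> ?F. \<not> (\<exists>g\<in>?F. (?R g \<le> ?R f \<and> ?U g < ?U f) \<or> (?R g < ?R f \<and> ?U g \<le> ?U f))}"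
    by (auto simp: pareto_efficient_def pareto_dominates_def)
  also have "\<dots> = {f \<in> ?F. \<exists>\<alpha>\<in>{0..1}. ?R f = ?R (f_alpha M X S w fstar \<alpha>) \<and>
                                      ?U f = ?U (f_alpha M X S w fstar \<alpha>)}"
    by (rule pareto_frontier_sqrt_tradeoff)
       (auto simp: pred_measurable_f_alpha risk_f_alpha unfairness_f_alpha intro: sqrt_var_bary_le)
  finally show ?thesis
    by simp
qed

end
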